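(* Let $x \in X$ and $\gamma > 0$, and set \[ x^+ := P_x(\gamma F(x)), \qquad \phi_\gamma(x) := F(x) - F(x^+) + \frac{1}{\gamma}\left[\nabla\omega(x^+) - \nabla\omega(x)\right]. \] (a) $\tilde g(x^+, \phi_\gamma(x)) \le 0$ for any $x \in X$ and $\gamma > 0$. (b) If $\omega$ has ${\cal Q}$-Lipschitz continuous gradients w.r.t. $\|\cdot\|$, i.e. $\|\nabla\omega(x) - \nabla\omega(z)\|_* \le {\cal Q}\|x-z\|$ for all $x,z\in X$, and $F$ is Hölder continuous, i.e. $\|F(x)-F(y)\|_* \le L\|x-y\|^\nu$ for all $x,y \in X$ for some $\nu \in (0,1]$ and $L>0$, then \[ \|\phi_\gamma(x)\|_* \le L\left[\gamma\|R_\gamma(x)\|\right]^\nu + {\cal Q}\|R_\gamma(x)\|. \] (c) If, in addition to the hypotheses of (b), the set $X$ is bounded, then \[ g(x^+) \le 2\,\Omega_{\omega,X}\left[L\gamma^\nu\|R_\gamma(x)\|^\nu + {\cal Q}\|R_\gamma(x)\|\right]. \]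
   Context: $\mathbb{R}^n$ carries an inner product $\langle\cdot,\cdot\rangle$ and a norm $\|\cdot\|$ (not necessarily induced by the inner product), with dual norm $\|\cdot\|_*$. $X \subseteq \mathbb{R}^n$ is a nonempty closed convex set and $F: X \to \mathbb{R}^n$ is continuous. A distance generating function with modulus $\alpha>0$ w.r.t. $\|\cdot\|$ is a function $\omega: X \to \mathbb{R}$ that is convex and continuous on $X$, such that $X^o = \{x \in X : \partial\omega(x) \neq \emptyset\}$ is convex, and such that $\omega$ restricted to $X^o$ is continuously differentiable and satisfies $\langle \nabla\omega(x') - \nabla\omega(x), x' - x\rangle \ge \alpha\|x'-x\|^2$ for all $x, x' \in X^o$. Fix such an $\omega$. $V(x,z) = \omega(z) - \omega(x) - \langle \nabla\omega(x), z - x\rangle$, $P_x(\phi) = \arg\min_{z \in X}\{\langle \phi, z\rangle + V(x,z)\}$, and $R_\gamma(x) = \frac{1}{\gamma}[x - P_x(\gamma F(x))]$. Gap functions: $g(x) = \sup_{z\in X}\langle F(x), x - z\rangle$ and $\tilde g(x,\phi) = \sup_{z \in X}\langle F(x) + \phi, x - z\rangle$. Further $D_{\omega,X} = \sqrt{\max_{x\in X}\omega(x) - \min_{x\in X}\omega(x)}$ and $\Omega_{\omega,X} = \sqrt{2/\alpha}\,D_{\omega,X}$. *)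

theory Defs
  imports "HOL-Analysis.Analysis"
begin

text \<open>The space R^n with an inner product is modelled by a type of class euclidean_space
  (finite-dimensional real inner product space); the (arbitrary) norm is a separate
  function N.\<close>

definition is_norm :: "('a::euclidean_space \<Rightarrow> real) \<Rightarrow> bool" where
  "is_norm N \<longleftrightarrow> (\<forall>x. N x \<ge> 0) \<and> (\<forall>x. N x = 0 \<longleftrightarrow> x = 0)
     \<and> (\<forall>c x. N (c *\<^sub>R x) = \<bar>c\<bar> * N x) \<and> (\<forall>x y. N (x + y) \<le> N x + N y)"

definition dual_norm :: "('a::euclidean_space \<Rightarrow> real) \<Rightarrow> 'a \<Rightarrow> real" where
  "dual_norm N y = Sup {y \<bullet> x | x. N x \<le> 1}"

definition subdiff :: "('a::euclidean_space \<Rightarrow> real) \<Rightarrow> 'a set \<Rightarrow> 'a \<Rightarrow> 'a set" where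
  "subdiff \<omega> X x = {g. \<forall>z\<in>X. \<omega> z \<ge> \<omega> x + g \<bullet> (z - x)}"

definition dgf_dom :: "('a::euclidean_space \<Rightarrow> real) \<Rightarrow> 'a set \<Rightarrow> 'a set" where
  "dgf_dom \<omega> X = {x \<in> X. subdiff \<omega> X x \<noteq> {}}"

definition is_dgf :: "('a::euclidean_space \<Rightarrow> real) \<Rightarrow> 'a set \<Rightarrow> ('a \<Rightarrow> real) \<Rightarrow> ('a \<Rightarrow> 'a) \<Rightarrow> real \<Rightarrow> bool" where
  "is_dgf N X \<omega> grad \<alpha> \<longleftrightarrow> \<alpha> > 0 \<and> convex_on X \<omega> \<and> continuous_on X \<omega>
     \<and> convex (dgf_dom \<omega> X)
     \<and> (\<forall>x\<in>dgf_dom \<omega> X. (\<omega> has_derivative (\<lambda>h. grad x \<bullet> h)) (at x within dgf_dom \<omega> X))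
     \<and> continuous_on (dgf_dom \<omega> X) grad
     \<and> (\<forall>x\<in>dgf_dom \<omega> X. \<forall>x'\<in>dgf_dom \<omega> X. (grad x' - grad x) \<bullet> (x' - x) \<ge> \<alpha> * (N (x' - x))\<^sup>2)"

definition bregman :: "('a::euclidean_space \<Rightarrow> real) \<Rightarrow> ('a \<Rightarrow> 'a) \<Rightarrow> 'a \<Rightarrow> 'a \<Rightarrow> real" where
  "bregman \<omega> grad x z = \<omega> z - \<omega> x - grad x \<bullet> (z - x)"

definition prox :: "'a::euclidean_space set \<Rightarrow> ('a \<Rightarrow> real) \<Rightarrow> ('a \<Rightarrow> 'a) \<Rightarrow> 'a \<Rightarrow> 'a \<Rightarrow> 'a" where
  "prox X \<omega> grad x \<phi> = (THE z. z \<in> X \<and>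
     (\<forall>z'\<in>X. \<phi> \<bullet> z + bregman \<omega> grad x z \<le> \<phi> \<bullet> z' + bregman \<omega> grad x z'))"

definition grad_map :: "'a::euclidean_space set \<Rightarrow> ('a \<Rightarrow> real) \<Rightarrow> ('a \<Rightarrow> 'a) \<Rightarrow> ('a \<Rightarrow> 'a) \<Rightarrow> real \<Rightarrow> 'a \<Rightarrow> 'a" where
  "grad_map X \<omega> grad F \<gamma> x = (1 / \<gamma>) *\<^sub>R (x - prox X \<omega> grad x (\<gamma> *\<^sub>R F x))"

text \<open>Gap functions, valued in the extended reals (the supremum may be infinite).\<close>
definition gap :: "'a::euclidean_space set \<Rightarrow> ('a \<Rightarrow> 'a) \<Rightarrow> 'a \<Rightarrow> ereal" where
  "gap X F x = (SUP z\<in>X. ereal (F x \<bullet> (x - z)))"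

definition gap_tilde :: "'a::euclidean_space set \<Rightarrow> ('a \<Rightarrow> 'a) \<Rightarrow> 'a \<Rightarrow> 'a \<Rightarrow> ereal" where
  "gap_tilde X F x \<phi> = (SUP z\<in>X. ereal ((F x + \<phi>) \<bullet> (x - z)))"

definition D_omega :: "'a set \<Rightarrow> ('a \<Rightarrow> real) \<Rightarrow> real" where
  "D_omega X \<omega> = sqrt (Sup (\<omega> ` X) - Inf (\<omega> ` X))"

definition Omega_omega :: "real \<Rightarrow> 'a set \<Rightarrow> ('a \<Rightarrow> real) \<Rightarrow> real" where
  "Omega_omega \<alpha> X \<omega> = sqrt (2 / \<alpha>) * D_omega X \<omega>"

end

theory Submission
  imports Defs
begin

text \<open>Part (a) is the optimality condition of the prox step: xp minimizes
  \<gamma> F x \<bullet> z + V(x, z) over X, so (\<gamma> F x + grad xp - grad x) \<bullet> (z - xp) \<ge> 0 for all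
  z \<in> X, which says exactly that the perturbed gap at xp is nonpositive. Part (b) is the
  triangle inequality for the dual norm combined with the Hoelder and Lipschitz hypotheses, using
  N (x - xp) = \<gamma> N R. For (c), part (a) gives F xp \<bullet> (xp - z) \<le> \<phi> \<bullet> (z - xp), which is at
  most the dual norm of \<phi> times N (z - xp), and strong convexity of \<omega> bounds the diameter of X
  by 2\<Omega>.

  The real work is to show that the prox map is well defined and that the first-order and
  strong-convexity inequalities for \<omega>, which come from its gradient on the domain Xo,
  extend to all of X; both rest on the density of Xo in X.\<close>

locale norm_function =
  fixes N :: "'a::euclidean_space \<Rightarrow> real"
  assumes is_norm: "is_norm N"
begin

lemma N_nonneg: "0 \<le> N x"
  using is_norm unfolding is_norm_def by blast

lemma N_eq_0_iff [simp]: "N x = 0 \<longleftrightarrow> x = 0"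
  using is_norm unfolding is_norm_def by blast

lemma N_0 [simp]: "N 0 = 0"
  by simp

lemma N_scaleR: "N (c *\<^sub>R x) = \<bar>c\<bar> * N x"
  using is_norm unfolding is_norm_def by blast

lemma N_triangle: "N (x + y) \<le> N x + N y"
  using is_norm unfolding is_norm_def by blast

lemma N_pos: "x \<noteq> 0 \<Longrightarrow> 0 < N x"
  using N_nonneg[of x] by (simp add: less_le)

lemma N_minus_commute: "N (x - y) = N (y - x)"
  using N_scaleR[of "-1" "x - y"] by simp

lemma convex_on_N: "convex_on UNIV N"
proof (rule convex_onI)
  fix t :: real and x y assume "0 < t" "t < 1"
  then show "N ((1 - t) *\<^sub>R x + t *\<^sub>R y) \<le> (1 - t) * N x + t * N y"
    using N_triangle[of "(1 - t) *\<^sub>R x" "t *\<^sub>R y"] by (simp add: N_scaleR)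
qed simp

lemma continuous_on_N: "continuous_on S N"
  using convex_on_continuous[OF open_UNIV convex_on_N] continuous_on_subset by blast

lemma N_lower_bound: "\<exists>m>0. \<forall>x. m * norm x \<le> N x"
proof -
  obtain b :: 'a where "b \<in> Basis" using nonempty_Basis by blast
  then have "sphere (0::'a) 1 \<noteq> {}" by (auto simp: norm_Basis)
  then obtain x0 where x0: "x0 \<in> sphere 0 1" "\<forall>y\<in>sphere 0 1. N x0 \<le> N y"
    using continuous_attains_inf[OF compact_sphere _ continuous_on_N] by blast
  have "N x0 * norm x \<le> N x" for x
  proof (cases "x = 0")
    case False
    then have "N x0 \<le> N (inverse (norm x) *\<^sub>R x)" using x0 by simp
    also have "\<dots> = N x / norm x" using False by (simp add: N_scaleR divide_inverse mult.commute)
    finally show ?thesis using False by (simp add: field_simps)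
  qed simp
  moreover have "0 < N x0" using x0 by (intro N_pos) auto
  ultimately show ?thesis by blast
qed

lemma dual_norm_bdd: "bdd_above {y \<bullet> x | x. N x \<le> 1}"
proof -
  obtain m where m: "m > 0" "\<forall>x. m * norm x \<le> N x" using N_lower_bound by blast
  have "y \<bullet> x \<le> norm y / m" if "N x \<le> 1" for x
  proof -
    have "norm x \<le> 1 / m" using m that by (metis order.trans mult.commute pos_le_divide_eq)
    then have "norm y * norm x \<le> norm y * (1 / m)" by (intro mult_left_mono) auto
    then show ?thesis using Cauchy_Schwarz_ineq2[of y x] by (auto simp: abs_le_iff)
  qed
  then show ?thesis by (intro bdd_aboveI[where M = "norm y / m"]) auto
qed

lemma inner_le_dual_norm_if_N_le_1: "N x \<le> 1 \<Longrightarrow> y \<bullet> x \<le> dual_norm N y"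
  unfolding dual_norm_def by (rule cSup_upper[OF _ dual_norm_bdd]) auto

lemma dual_norm_leI: "(\<And>x. N x \<le> 1 \<Longrightarrow> y \<bullet> x \<le> c) \<Longrightarrow> dual_norm N y \<le> c"
  unfolding dual_norm_def by (rule cSup_least) (auto intro!: exI[of _ 0])

lemma dual_norm_nonneg: "0 \<le> dual_norm N y"
  using inner_le_dual_norm_if_N_le_1[of 0 y] by simp

lemma inner_le_dual_norm: "y \<bullet> x \<le> dual_norm N y * N x"
proof (cases "x = 0")
  case False
  then have p: "0 < N x" by (rule N_pos)
  then have "y \<bullet> ((1 / N x) *\<^sub>R x) \<le> dual_norm N y"
    by (intro inner_le_dual_norm_if_N_le_1) (simp add: N_scaleR)
  then show ?thesis using p by (simp add: field_simps)
qed simp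

lemma dual_norm_triangle: "dual_norm N (a + b) \<le> dual_norm N a + dual_norm N b"
  by (rule dual_norm_leI) (simp add: inner_add_left add_mono inner_le_dual_norm_if_N_le_1)

lemma dual_norm_scaleR_le: "dual_norm N (c *\<^sub>R a) \<le> \<bar>c\<bar> * dual_norm N a"
proof (rule dual_norm_leI)
  fix x assume "N x \<le> 1"
  then have "N (sgn c *\<^sub>R x) \<le> 1" by (auto simp: N_scaleR sgn_if)
  then have "\<bar>c\<bar> * (a \<bullet> (sgn c *\<^sub>R x)) \<le> \<bar>c\<bar> * dual_norm N a"
    by (intro mult_left_mono inner_le_dual_norm_if_N_le_1) auto
  then show "(c *\<^sub>R a) \<bullet> x \<le> \<bar>c\<bar> * dual_norm N a" by (simp add: mult.assoc[symmetric] abs_mult_sgn)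
qed

end

lemma subgradient_at_penalized_local_min:
  fixes f :: "'a::real_inner \<Rightarrow> real"
  assumes X: "convex X" and f: "convex_on X f" and p: "p \<in> X" and \<delta>: "0 < \<delta>"
    and min: "\<And>w. w \<in> X \<Longrightarrow> dist w p < \<delta> \<Longrightarrow>
                f p + M * (norm (p - z))\<^sup>2 \<le> f w + M * (norm (w - z))\<^sup>2"
    and y: "y \<in> X"
  shows "f p + ((2 * M) *\<^sub>R (z - p)) \<bullet> (y - p) \<le> f y"
proof -
  define d where "d = y - p"
  define A where "A = f y - f p + 2 * M * ((p - z) \<bullet> d)"
  define B where "B = M * (norm d)\<^sup>2"
  define t0 where "t0 = min 1 (\<delta> / (norm d + 1))"
  have d1: "0 < norm d + 1" by (simp add: add_nonneg_pos)
  have "0 \<le> A + t * B" if t: "0 < t" "t < t0" for t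
  proof -
    have "t * norm d \<le> \<delta> / (norm d + 1) * norm d"
      using t by (intro mult_right_mono) (auto simp: t0_def)
    also have "\<dots> < \<delta>"
      using \<delta> d1 by (simp add: field_simps)
    finally have "t * norm d < \<delta>" .
    define w where "w = (1 - t) *\<^sub>R p + t *\<^sub>R y"
    have wp: "w - p = t *\<^sub>R d" and wz: "w - z = (p - z) + t *\<^sub>R d"
      by (simp_all add: w_def d_def algebra_simps)
    have w: "w \<in> X" "dist w p < \<delta>"
      using convexD[OF X p y, of "1 - t" t] t wp \<open>t * norm d < \<delta>\<close>
      by (simp_all add: w_def t0_def dist_norm)
    have "f w \<le> (1 - t) * f p + t * f y"
      using convex_onD[OF f, of t p y] t p y by (simp add: w_def t0_def)
    then have "0 \<le> t * f y - t * f p + M * ((norm (w - z))\<^sup>2 - (norm (p - z))\<^sup>2)"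
      using min[OF w] unfolding right_diff_distrib by (simp add: algebra_simps)
    also have "(norm (w - z))\<^sup>2 - (norm (p - z))\<^sup>2 = 2 * t * ((p - z) \<bullet> d) + t\<^sup>2 * (norm d)\<^sup>2"
      unfolding wz power2_norm_eq_inner
      by (simp add: inner_add_left inner_add_right inner_commute algebra_simps power2_eq_square)
    also have "t * f y - t * f p + M * (2 * t * ((p - z) \<bullet> d) + t\<^sup>2 * (norm d)\<^sup>2) = t * (A + t * B)"
      by (simp add: A_def B_def algebra_simps power2_eq_square)
    finally show ?thesis using t by (simp add: zero_le_mult_iff)
  qed
  then have "\<forall>\<^sub>F t in at_right 0. 0 \<le> A + t * B"
    unfolding eventually_at_right_field using \<delta> d1 by (intro exI[of _ t0]) (auto simp: t0_def)
  moreover have "((\<lambda>t. A + t * B) \<longlongrightarrow> A) (at_right 0)"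
    by (auto intro!: tendsto_eq_intros)
  ultimately have "0 \<le> A" using tendsto_lowerbound by (metis trivial_limit_at_right_real)
  then show ?thesis by (simp add: A_def d_def algebra_simps inner_diff_left inner_diff_right)
qed

locale distance_generating = norm_function N for N :: "'a::euclidean_space \<Rightarrow> real" +
  fixes X :: "'a set" and \<omega> :: "'a \<Rightarrow> real" and grad :: "'a \<Rightarrow> 'a" and \<alpha> :: real
  assumes X_nonempty: "X \<noteq> {}" and closed_X: "closed X" and convex_X: "convex X"
    and is_dgf: "is_dgf N X \<omega> grad \<alpha>"
begin

abbreviation Xo :: "'a set" where "Xo \<equiv> dgf_dom \<omega> X"

lemma alpha_pos: "0 < \<alpha>"
  using is_dgf unfolding is_dgf_def by blast

lemma convex_on_omega: "convex_on X \<omega>"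
  using is_dgf unfolding is_dgf_def by blast

lemma continuous_on_omega: "continuous_on X \<omega>"
  using is_dgf unfolding is_dgf_def by blast

lemma convex_Xo: "convex Xo"
  using is_dgf unfolding is_dgf_def by blast

lemma has_derivative_omega: "x \<in> Xo \<Longrightarrow> (\<omega> has_derivative (\<lambda>h. grad x \<bullet> h)) (at x within Xo)"
  using is_dgf unfolding is_dgf_def by blast

lemma grad_strongly_monotone:
  "x \<in> Xo \<Longrightarrow> x' \<in> Xo \<Longrightarrow> \<alpha> * (N (x' - x))\<^sup>2 \<le> (grad x' - grad x) \<bullet> (x' - x)"
  using is_dgf unfolding is_dgf_def by blast

lemma Xo_subset: "Xo \<subseteq> X"
  unfolding dgf_dom_def by auto

lemma XoI: "y \<in> X \<Longrightarrow> (\<And>z. z \<in> X \<Longrightarrow> \<omega> y + c \<bullet> (z - y) \<le> \<omega> z) \<Longrightarrow> y \<in> Xo"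
  unfolding dgf_dom_def subdiff_def by auto

lemma segment_in_Xo: "y \<in> Xo \<Longrightarrow> z \<in> Xo \<Longrightarrow> t \<in> {0..1} \<Longrightarrow> y + t *\<^sub>R (z - y) \<in> Xo"
  using convexD[OF convex_Xo, of y z "1 - t" t] by (simp add: algebra_simps)

lemma has_field_derivative_omega_segment:
  assumes "y \<in> Xo" "z \<in> Xo" "t \<in> {0..1}"
  shows "((\<lambda>s. \<omega> (y + s *\<^sub>R (z - y))) has_field_derivative grad (y + t *\<^sub>R (z - y)) \<bullet> (z - y))
           (at t within {0..1})"
proof -
  have line: "((\<lambda>s. y + s *\<^sub>R (z - y)) has_derivative (\<lambda>s. s *\<^sub>R (z - y))) (at t within {0..1})"
    by (auto intro!: derivative_eq_intros)
  have "((\<lambda>s. \<omega> (y + s *\<^sub>R (z - y))) has_derivative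
               (\<lambda>h. grad (y + t *\<^sub>R (z - y)) \<bullet> (h *\<^sub>R (z - y)))) (at t within {0..1})"
    by (rule has_derivative_in_compose2[OF has_derivative_omega _ assms(3) line])
       (use segment_in_Xo assms in auto)
  then show ?thesis
    unfolding has_field_derivative_def by (simp add: mult.commute[of _ "grad _ \<bullet> _"])
qed

lemma subgradient_le_grad_on_Xo:
  assumes y: "y \<in> Xo" and c: "\<And>z. z \<in> X \<Longrightarrow> \<omega> y + c \<bullet> (z - y) \<le> \<omega> z" and z: "z \<in> Xo"
  shows "c \<bullet> (z - y) \<le> grad y \<bullet> (z - y)"
proof -
  let ?g = "\<lambda>s. \<omega> (y + s *\<^sub>R (z - y))"
  have "(?g has_field_derivative grad y \<bullet> (z - y)) (at 0 within {0..1})"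
    using has_field_derivative_omega_segment[OF y z, of 0] by simp
  then have "((\<lambda>s. (?g s - ?g 0) / s) \<longlongrightarrow> grad y \<bullet> (z - y)) (at_right 0)"
    unfolding has_field_derivative_iff by (simp add: at_within_Icc_at_right)
  moreover have "c \<bullet> (z - y) \<le> (?g s - ?g 0) / s" if "0 < s" "s < 1" for s
  proof -
    have "y + s *\<^sub>R (z - y) \<in> X" using segment_in_Xo[OF y z, of s] that Xo_subset by auto
    from c[OF this] have "s * (c \<bullet> (z - y)) \<le> ?g s - ?g 0" by (simp add: algebra_simps)
    then show ?thesis using that by (simp add: field_simps)
  qed
  then have "\<forall>\<^sub>F s in at_right 0. c \<bullet> (z - y) \<le> (?g s - ?g 0) / s"
    unfolding eventually_at_right_field by (intro exI[of _ 1]) auto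
  ultimately show ?thesis by (rule tendsto_lowerbound) simp
qed

lemma strong_convexity_on_Xo:
  assumes y: "y \<in> Xo" and z: "z \<in> Xo"
  shows "\<omega> y + grad y \<bullet> (z - y) + \<alpha> / 2 * (N (z - y))\<^sup>2 \<le> \<omega> z"
proof -
  define d where "d = z - y"
  define h where "h = (\<lambda>s. \<omega> (y + s *\<^sub>R d) - s * (grad y \<bullet> d) - \<alpha> / 2 * s\<^sup>2 * (N d)\<^sup>2)"
  have "h 0 \<le> h 1"
  proof (rule DERIV_nonneg_imp_increasing_open[of 0 1 h])
    fix t :: real assume t: "0 < t" "t < 1"
    let ?h' = "grad (y + t *\<^sub>R d) \<bullet> d - grad y \<bullet> d - \<alpha> / 2 * (2 * t) * (N d)\<^sup>2"
    have "((\<lambda>s. \<omega> (y + s *\<^sub>R d)) has_field_derivative grad (y + t *\<^sub>R d) \<bullet> d) (at t)"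
      using has_field_derivative_omega_segment[OF y z, of t] t
      unfolding d_def by (simp add: at_within_Icc_at)
    then have "(h has_field_derivative ?h') (at t)"
      unfolding h_def by (auto intro!: derivative_eq_intros)
    moreover have "0 \<le> ?h'"
    proof -
      have "y + t *\<^sub>R d \<in> Xo" using segment_in_Xo[OF y z, of t] t unfolding d_def by auto
      from grad_strongly_monotone[OF y this]
      have "t * (t * (\<alpha> * (N d)\<^sup>2)) \<le> t * ((grad (y + t *\<^sub>R d) - grad y) \<bullet> d)"
        using t by (simp add: N_scaleR power_mult_distrib power2_eq_square algebra_simps)
      then have "t * (\<alpha> * (N d)\<^sup>2) \<le> (grad (y + t *\<^sub>R d) - grad y) \<bullet> d" using t by simp
      then show ?thesis by (simp add: inner_diff_left algebra_simps)
    qed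
    ultimately show "\<exists>D. (h has_real_derivative D) (at t) \<and> 0 \<le> D" by blast
  next
    have "continuous_on {0..1} (\<lambda>s. \<omega> (y + s *\<^sub>R d))"
      by (rule continuous_on_compose2[OF continuous_on_omega])
         (use segment_in_Xo[OF y z] Xo_subset d_def in \<open>auto intro!: continuous_intros\<close>)
    then show "continuous_on {0..1} h" unfolding h_def by (auto intro!: continuous_intros)
  qed simp
  then show ?thesis unfolding h_def d_def by simp
qed

text \<open>Minimizing \<omega> plus a steep quadratic penalty centred at z \<in> X produces a point near z
  at which \<omega> has a subgradient.\<close>
lemma Xo_dense: "X \<subseteq> closure Xo"
proof
  fix z assume z: "z \<in> X"
  show "z \<in> closure Xo" unfolding closure_approachable
  proof (intro allI impI)
    fix e :: real assume e: "0 < e"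
    define r where "r = min e (1 / 2)"
    define K where "K = X \<inter> cball z 1"
    have K: "compact K" "z \<in> K" "K \<subseteq> X"
      using closed_X z by (auto simp: K_def closed_Int_compact)
    have cont: "continuous_on K \<omega>" using continuous_on_omega K(3) continuous_on_subset by blast
    obtain a where a: "a \<in> K" "\<forall>w\<in>K. \<omega> a \<le> \<omega> w"
      using continuous_attains_inf[OF K(1) _ cont] K(2) by blast
    define M where "M = (\<omega> z - \<omega> a) / r\<^sup>2 + 1"
    have "0 < r" using e by (simp add: r_def)
    have "0 \<le> (\<omega> z - \<omega> a) / r\<^sup>2" using a K(2) by simp
    then have "0 < M" by (simp add: M_def)
    let ?f = "\<lambda>w. \<omega> w + M * (norm (w - z))\<^sup>2"
    have "continuous_on K ?f" by (intro continuous_intros cont)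
    then obtain p where p: "p \<in> K" "\<forall>w\<in>K. ?f p \<le> ?f w"
      using continuous_attains_inf[OF K(1)] K(2) by blast
    have "M * (norm (p - z))\<^sup>2 \<le> \<omega> z - \<omega> a" using p a K(2) by force
    also have "\<dots> < M * r\<^sup>2" using \<open>0 < r\<close> by (simp add: M_def field_simps)
    finally have "norm (p - z) < r"
      using \<open>0 < M\<close> \<open>0 < r\<close> by (simp add: power_less_imp_less_base)
    then have pz: "dist p z < r" by (simp add: dist_norm)
    have "p \<in> X" using p K by auto
    have "p \<in> Xo"
    proof (rule XoI[OF \<open>p \<in> X\<close>])
      fix y assume y: "y \<in> X"
      have local_min: "?f p \<le> ?f w" if "w \<in> X" "dist w p < 1 / 2" for w
      proof -
        have "dist w z < 1" using dist_triangle[of w z p] pz that by (simp add: r_def)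
        then show ?thesis using p that by (simp add: K_def dist_commute)
      qed
      show "\<omega> p + ((2 * M) *\<^sub>R (z - p)) \<bullet> (y - p) \<le> \<omega> y"
        using subgradient_at_penalized_local_min[where \<delta> = "1 / 2", OF convex_X convex_on_omega
              \<open>p \<in> X\<close> _ local_min y]
        by simp
    qed
    then show "\<exists>w\<in>Xo. dist w z < e" using pz by (auto simp: r_def)
  qed
qed

lemma subgradient_le_grad:
  assumes y: "y \<in> Xo" and c: "\<And>z. z \<in> X \<Longrightarrow> \<omega> y + c \<bullet> (z - y) \<le> \<omega> z" and z: "z \<in> X"
  shows "c \<bullet> (z - y) \<le> grad y \<bullet> (z - y)"
proof -
  have "closure Xo \<subseteq> {z. c \<bullet> (z - y) \<le> grad y \<bullet> (z - y)}"
    using subgradient_le_grad_on_Xo[OF y c]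
    by (intro closure_minimal closed_Collect_le) (auto intro!: continuous_intros)
  then show ?thesis using Xo_dense z by blast
qed

lemma strong_convexity:
  assumes y: "y \<in> Xo" and z: "z \<in> X"
  shows "\<omega> y + grad y \<bullet> (z - y) + \<alpha> / 2 * (N (z - y))\<^sup>2 \<le> \<omega> z"
proof -
  have "closure Xo \<subseteq> {z \<in> X. \<omega> y + grad y \<bullet> (z - y) + \<alpha> / 2 * (N (z - y))\<^sup>2 \<le> \<omega> z}"
    using strong_convexity_on_Xo[OF y] Xo_subset
    by (intro closure_minimal continuous_on_closed_Collect_le closed_X continuous_on_omega)
       (auto intro!: continuous_intros continuous_on_compose2[OF continuous_on_N])
  then show ?thesis using Xo_dense z by blast
qed

definition prox_objective :: "'a \<Rightarrow> 'a \<Rightarrow> 'a \<Rightarrow> real" where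
  "prox_objective x \<phi> z = \<phi> \<bullet> z + bregman \<omega> grad x z"

lemma subgradient_at_prox_minimizer:
  assumes "\<forall>z\<in>X. prox_objective x \<phi> p \<le> prox_objective x \<phi> z" and "z \<in> X"
  shows "\<omega> p + (grad x - \<phi>) \<bullet> (z - p) \<le> \<omega> z"
  using assms unfolding prox_objective_def bregman_def
  by (auto simp: inner_diff_left inner_diff_right algebra_simps)

lemma prox_minimizer_in_Xo:
  assumes "p \<in> X" "\<forall>z\<in>X. prox_objective x \<phi> p \<le> prox_objective x \<phi> z"
  shows "p \<in> Xo"
  by (rule XoI[OF assms(1) subgradient_at_prox_minimizer[OF assms(2)]])

lemma prox_minimizer_variational_ineq:
  assumes "p \<in> X" "\<forall>z\<in>X. prox_objective x \<phi> p \<le> prox_objective x \<phi> z" and "z \<in> X"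
  shows "(grad x - \<phi>) \<bullet> (z - p) \<le> grad p \<bullet> (z - p)"
  by (rule subgradient_le_grad[OF prox_minimizer_in_Xo[OF assms(1,2)]
        subgradient_at_prox_minimizer[OF assms(2)] assms(3)])

lemma prox_objective_growth:
  assumes "p \<in> X" "\<forall>z\<in>X. prox_objective x \<phi> p \<le> prox_objective x \<phi> z" and z: "z \<in> X"
  shows "prox_objective x \<phi> p + \<alpha> / 2 * (N (z - p))\<^sup>2 \<le> prox_objective x \<phi> z"
  using strong_convexity[OF prox_minimizer_in_Xo[OF assms(1,2)] z]
    prox_minimizer_variational_ineq[OF assms]
  unfolding prox_objective_def bregman_def
  by (simp add: inner_diff_left inner_diff_right algebra_simps)

text \<open>By strong convexity the objective grows quadratically in the distance from x, so it
  suffices to minimize it over a compact piece of X.\<close>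
lemma prox_minimizer_exists:
  assumes x: "x \<in> Xo"
  shows "\<exists>p\<in>X. \<forall>z\<in>X. prox_objective x \<phi> p \<le> prox_objective x \<phi> z"
proof -
  have xX: "x \<in> X" using x Xo_subset by blast
  obtain m where m: "0 < m" "\<forall>v. m * norm v \<le> N v" using N_lower_bound by blast
  define k where "k = \<alpha> / 2 * m\<^sup>2"
  have "0 < k" using m alpha_pos by (simp add: k_def)
  define K where "K = X \<inter> cball x (norm \<phi> / k + 1)"
  have K: "compact K" "x \<in> K" "K \<subseteq> X"
    using closed_X xX \<open>0 < k\<close> by (auto simp: K_def closed_Int_compact)
  have "continuous_on K (prox_objective x \<phi>)"
    using K(3) unfolding prox_objective_def bregman_def
    by (intro continuous_intros continuous_on_subset[OF continuous_on_omega])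
  then obtain p where p: "p \<in> K" "\<forall>z\<in>K. prox_objective x \<phi> p \<le> prox_objective x \<phi> z"
    using continuous_attains_inf[OF K(1)] K(2) by blast
  have far: "prox_objective x \<phi> x < prox_objective x \<phi> z" if z: "z \<in> X" "z \<notin> K" for z
  proof -
    let ?\<rho> = "norm (z - x)"
    have "norm \<phi> < k * ?\<rho>"
      using z \<open>0 < k\<close> by (auto simp: K_def dist_norm norm_minus_commute field_simps)
    moreover have "0 < ?\<rho>" using z K(2) by auto
    ultimately have "norm \<phi> * ?\<rho> < k * ?\<rho>\<^sup>2"
      by (simp add: power2_eq_square mult.assoc[symmetric] mult_strict_right_mono)
    also have "k * ?\<rho>\<^sup>2 = \<alpha> / 2 * (m * ?\<rho>)\<^sup>2" by (simp add: k_def power_mult_distrib)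
    also have "\<dots> \<le> \<alpha> / 2 * (N (z - x))\<^sup>2"
      using m alpha_pos by (intro mult_left_mono power_mono) auto
    also have "\<dots> \<le> bregman \<omega> grad x z"
      using strong_convexity[OF x z(1)] by (simp add: bregman_def)
    finally show ?thesis
      using norm_cauchy_schwarz[of "- \<phi>" "z - x"]
      by (simp add: prox_objective_def bregman_def inner_diff_right)
  qed
  have "prox_objective x \<phi> p \<le> prox_objective x \<phi> z" if "z \<in> X" for z
    using p K(2) far[OF that] by (cases "z \<in> K") auto
  then show ?thesis using p K(3) by blast
qed

lemma prox_minimizer_unique:
  assumes p: "p \<in> X" "\<forall>z\<in>X. prox_objective x \<phi> p \<le> prox_objective x \<phi> z"
    and q: "q \<in> X" "\<forall>z\<in>X. prox_objective x \<phi> q \<le> prox_objective x \<phi> z"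
  shows "p = q"
proof -
  have "prox_objective x \<phi> p + \<alpha> / 2 * (N (q - p))\<^sup>2 \<le> prox_objective x \<phi> q"
    by (rule prox_objective_growth[OF p q(1)])
  moreover have "prox_objective x \<phi> q \<le> prox_objective x \<phi> p" using q p by blast
  ultimately have "\<alpha> / 2 * (N (q - p))\<^sup>2 \<le> 0" by linarith
  then have "(N (q - p))\<^sup>2 \<le> 0" using alpha_pos by (simp add: mult_le_0_iff)
  then show ?thesis by simp
qed

lemma prox_minimizes:
  assumes "x \<in> Xo"
  shows "prox X \<omega> grad x \<phi> \<in> X"
    and "\<forall>z\<in>X. prox_objective x \<phi> (prox X \<omega> grad x \<phi>) \<le> prox_objective x \<phi> z"
proof -
  have "\<exists>!p. p \<in> X \<and> (\<forall>z\<in>X. prox_objective x \<phi> p \<le> prox_objective x \<phi> z)"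
    using prox_minimizer_exists[OF assms] prox_minimizer_unique by blast
  then have "prox X \<omega> grad x \<phi> \<in> X
      \<and> (\<forall>z\<in>X. prox_objective x \<phi> (prox X \<omega> grad x \<phi>) \<le> prox_objective x \<phi> z)"
    unfolding prox_def prox_objective_def[symmetric] by (rule theI')
  then show "prox X \<omega> grad x \<phi> \<in> X"
    and "\<forall>z\<in>X. prox_objective x \<phi> (prox X \<omega> grad x \<phi>) \<le> prox_objective x \<phi> z"
    by blast+
qed

lemma prox_variational_ineq:
  fixes v :: 'a
  assumes x: "x \<in> Xo" and \<gamma>: "0 < \<gamma>" and z: "z \<in> X"
  defines "y \<equiv> prox X \<omega> grad x (\<gamma> *\<^sub>R v)"
  shows "(v + (1 / \<gamma>) *\<^sub>R (grad y - grad x)) \<bullet> (y - z) \<le> 0"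
proof -
  have "(grad x - \<gamma> *\<^sub>R v) \<bullet> (z - y) \<le> grad y \<bullet> (z - y)"
    using prox_minimizer_variational_ineq prox_minimizes[OF x] z unfolding y_def by blast
  then have "\<gamma> * ((v + (1 / \<gamma>) *\<^sub>R (grad y - grad x)) \<bullet> (y - z)) \<le> 0"
    using \<gamma> by (simp add: inner_add_left inner_diff_left inner_diff_right algebra_simps)
  then show ?thesis using \<gamma> by (simp add: mult_le_0_iff)
qed

text \<open>Every point of a compact X lies within \<Omega> of the minimizer q of \<omega>, since
  \<alpha>/2 N(y - q)^2 \<le> \<omega> y - \<omega> q by strong convexity and the optimality of q.\<close>
lemma N_diff_le_Omega_omega:
  assumes bounded: "bounded X" and z: "z \<in> X" and w: "w \<in> X"
  shows "N (z - w) \<le> 2 * Omega_omega \<alpha> X \<omega>"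
proof -
  have "compact X" using bounded closed_X by (simp add: compact_eq_bounded_closed)
  then obtain q where q: "q \<in> X" "\<forall>y\<in>X. \<omega> q \<le> \<omega> y"
    using continuous_attains_inf[OF _ X_nonempty continuous_on_omega] by blast
  have "q \<in> Xo" by (rule XoI[OF q(1), of 0]) (use q in auto)
  have "bounded (\<omega> ` X)"
    using compact_continuous_image[OF continuous_on_omega \<open>compact X\<close>] compact_imp_bounded by blast
  then have bdd: "bdd_above (\<omega> ` X)" "bdd_below (\<omega> ` X)"
    by (auto intro: bounded_imp_bdd_above bounded_imp_bdd_below)
  have near_q: "N (y - q) \<le> Omega_omega \<alpha> X \<omega>" if y: "y \<in> X" for y
  proof -
    have "0 \<le> grad q \<bullet> (y - q)" using subgradient_le_grad[OF \<open>q \<in> Xo\<close> _ y, of 0] q by auto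
    then have "\<alpha> / 2 * (N (y - q))\<^sup>2 \<le> \<omega> y - \<omega> q" using strong_convexity[OF \<open>q \<in> Xo\<close> y] by simp
    also have "\<dots> \<le> Sup (\<omega> ` X) - Inf (\<omega> ` X)"
      using cSup_upper[OF imageI[OF y] bdd(1)] cInf_lower[OF imageI[OF q(1)] bdd(2)] by simp
    finally have "(N (y - q))\<^sup>2 \<le> 2 / \<alpha> * (Sup (\<omega> ` X) - Inf (\<omega> ` X))"
      using alpha_pos by (simp add: field_simps)
    then show ?thesis
      unfolding Omega_omega_def D_omega_def real_sqrt_mult[symmetric] by (rule real_le_rsqrt)
  qed
  have "N (z - w) \<le> N (z - q) + N (w - q)"
    using N_triangle[of "z - q" "q - w"] N_minus_commute[of q w] by simp
  then show ?thesis using near_q[OF z] near_q[OF w] by simp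
qed

end

lemma gap_tilde_le_0_iff:
  "gap_tilde X F y \<phi> \<le> 0 \<longleftrightarrow> (\<forall>z\<in>X. (F y + \<phi>) \<bullet> (y - z) \<le> 0)"
  unfolding gap_tilde_def by (simp add: SUP_le_iff)

context norm_function
begin

lemma gap_le_if_gap_tilde_le_0:
  assumes "gap_tilde X F y \<phi> \<le> 0" and diam: "\<forall>z\<in>X. N (z - y) \<le> D"
  shows "gap X F y \<le> ereal (dual_norm N \<phi> * D)"
  unfolding gap_def
proof (rule SUP_least)
  fix z assume z: "z \<in> X"
  have "F y \<bullet> (y - z) \<le> \<phi> \<bullet> (z - y)"
    using assms(1) z unfolding gap_tilde_le_0_iff by (auto simp: inner_add_left inner_diff_right)
  also have "\<dots> \<le> dual_norm N \<phi> * N (z - y)" by (rule inner_le_dual_norm)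
  also have "\<dots> \<le> dual_norm N \<phi> * D" using diam z by (intro mult_left_mono dual_norm_nonneg) auto
  finally show "ereal (F y \<bullet> (y - z)) \<le> ereal (dual_norm N \<phi> * D)" by simp
qed

lemma dual_norm_residual_le:
  assumes "x \<in> X" "y \<in> X" "0 < \<gamma>"
    and grad_lipschitz: "\<forall>u\<in>X. \<forall>z\<in>X. dual_norm N (grad u - grad z) \<le> Q * N (u - z)"
    and F_hoelder: "\<forall>u\<in>X. \<forall>v\<in>X. dual_norm N (F u - F v) \<le> L * N (u - v) powr \<nu>"
  shows "dual_norm N (F x - F y + (1 / \<gamma>) *\<^sub>R (grad y - grad x))
           \<le> L * N (x - y) powr \<nu> + Q / \<gamma> * N (x - y)"
proof -
  have "dual_norm N ((1 / \<gamma>) *\<^sub>R (grad y - grad x)) \<le> 1 / \<gamma> * dual_norm N (grad y - grad x)"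
    using dual_norm_scaleR_le[of "1 / \<gamma>"] \<open>0 < \<gamma>\<close> by simp
  also have "\<dots> \<le> 1 / \<gamma> * (Q * N (x - y))"
    using grad_lipschitz assms(1-3) N_minus_commute[of x y] by (intro mult_left_mono) auto
  finally have "dual_norm N ((1 / \<gamma>) *\<^sub>R (grad y - grad x)) \<le> Q / \<gamma> * N (x - y)" by simp
  moreover have "dual_norm N (F x - F y) \<le> L * N (x - y) powr \<nu>" using F_hoelder assms(1,2) by blast
  ultimately show ?thesis
    using dual_norm_triangle[of "F x - F y" "(1 / \<gamma>) *\<^sub>R (grad y - grad x)"] by linarith
qed

end

context distance_generating
begin

lemma gap_le_2_Omega_omega_mult:
  assumes "bounded X" "y \<in> X" "gap_tilde X F y \<phi> \<le> 0" "dual_norm N \<phi> \<le> B"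
  shows "gap X F y \<le> ereal (2 * Omega_omega \<alpha> X \<omega> * B)"
proof -
  have diam: "\<forall>z\<in>X. N (z - y) \<le> 2 * Omega_omega \<alpha> X \<omega>"
    using N_diff_le_Omega_omega[OF \<open>bounded X\<close> _ \<open>y \<in> X\<close>] by blast
  then have "0 \<le> 2 * Omega_omega \<alpha> X \<omega>" using \<open>y \<in> X\<close> by force
  have "gap X F y \<le> ereal (dual_norm N \<phi> * (2 * Omega_omega \<alpha> X \<omega>))"
    by (rule gap_le_if_gap_tilde_le_0[OF assms(3) diam])
  also have "\<dots> \<le> ereal (2 * Omega_omega \<alpha> X \<omega> * B)"
    using mult_right_mono[OF assms(4) \<open>0 \<le> 2 * Omega_omega \<alpha> X \<omega>\<close>] by (simp add: mult.commute)
  finally show ?thesis .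
qed

end

theorem proposition3:
  fixes N :: "'a::euclidean_space \<Rightarrow> real"
    and X :: "'a set" and F :: "'a \<Rightarrow> 'a"
    and \<omega> :: "'a \<Rightarrow> real" and grad :: "'a \<Rightarrow> 'a"
    and \<alpha> \<gamma> :: real and x :: 'a
  assumes norm: "is_norm N"
    and X: "X \<noteq> {}" "closed X" "convex X"
    and F: "continuous_on X F"
    and dgf: "is_dgf N X \<omega> grad \<alpha>"
    and x: "x \<in> dgf_dom \<omega> X"
    and \<gamma>: "\<gamma> > 0"
  defines "xp \<equiv> prox X \<omega> grad x (\<gamma> *\<^sub>R F x)"
    and "\<phi> \<equiv> F x - F (prox X \<omega> grad x (\<gamma> *\<^sub>R F x)) + (1 / \<gamma>) *\<^sub>R (grad (prox X \<omega> grad x (\<gamma> *\<^sub>R F x)) - grad x)"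
    and "R \<equiv> grad_map X \<omega> grad F \<gamma> x"
  shows "gap_tilde X F xp \<phi> \<le> 0
    \<and> (\<forall>Q L \<nu>. (\<forall>u\<in>X. \<forall>z\<in>X. dual_norm N (grad u - grad z) \<le> Q * N (u - z))
          \<and> 0 < \<nu> \<and> \<nu> \<le> 1 \<and> L > 0
          \<and> (\<forall>u\<in>X. \<forall>v\<in>X. dual_norm N (F u - F v) \<le> L * N (u - v) powr \<nu>)
          \<longrightarrow> dual_norm N \<phi> \<le> L * (\<gamma> * N R) powr \<nu> + Q * N R)
    \<and> (\<forall>Q L \<nu>. (\<forall>u\<in>X. \<forall>z\<in>X. dual_norm N (grad u - grad z) \<le> Q * N (u - z))
          \<and> 0 < \<nu> \<and> \<nu> \<le> 1 \<and> L > 0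
          \<and> (\<forall>u\<in>X. \<forall>v\<in>X. dual_norm N (F u - F v) \<le> L * N (u - v) powr \<nu>)
          \<and> bounded X
          \<longrightarrow> gap X F xp \<le> ereal (2 * Omega_omega \<alpha> X \<omega> *
                 (L * \<gamma> powr \<nu> * N R powr \<nu> + Q * N R)))"
proof -
  interpret distance_generating N X \<omega> grad \<alpha>
    using norm X dgf by unfold_locales auto
  have "x \<in> X" "xp \<in> X" using x Xo_subset prox_minimizes(1)[OF x] by (auto simp: xp_def)
  have \<phi>_eq: "\<phi> = F x - F xp + (1 / \<gamma>) *\<^sub>R (grad xp - grad x)" by (simp add: \<phi>_def xp_def)
  have part_a: "gap_tilde X F xp \<phi> \<le> 0"
    unfolding gap_tilde_le_0_iff \<phi>_eq using prox_variational_ineq[OF x \<gamma>, of _ "F x"]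
    by (simp add: xp_def)
  have "N (x - xp) = \<gamma> * N R"
    using \<gamma> by (simp add: R_def grad_map_def xp_def N_scaleR)
  then have part_b: "dual_norm N \<phi> \<le> L * (\<gamma> * N R) powr \<nu> + Q * N R"
    if "\<forall>u\<in>X. \<forall>z\<in>X. dual_norm N (grad u - grad z) \<le> Q * N (u - z)"
      and "\<forall>u\<in>X. \<forall>v\<in>X. dual_norm N (F u - F v) \<le> L * N (u - v) powr \<nu>" for Q L \<nu>
    using dual_norm_residual_le[OF \<open>x \<in> X\<close> \<open>xp \<in> X\<close> \<gamma> that] \<gamma> by (simp add: \<phi>_eq)
  have part_c: "gap X F xp \<le> ereal (2 * Omega_omega \<alpha> X \<omega> * (L * \<gamma> powr \<nu> * N R powr \<nu> + Q * N R))"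
    if "\<forall>u\<in>X. \<forall>z\<in>X. dual_norm N (grad u - grad z) \<le> Q * N (u - z)"
      and "\<forall>u\<in>X. \<forall>v\<in>X. dual_norm N (F u - F v) \<le> L * N (u - v) powr \<nu>"
      and "bounded X" for Q L \<nu>
    using gap_le_2_Omega_omega_mult[OF \<open>bounded X\<close> \<open>xp \<in> X\<close> part_a part_b[OF that(1,2)]] \<gamma>
    by (simp add: powr_mult N_nonneg mult.assoc)
  show ?thesis using part_a part_b part_c by blast
qed

end
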